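(* Let \[ q(x,y,z,a,b)=\frac{(1+xz)(1+yz)}{1-xy}-a\frac{(x+z)(1+yz)}{x-y}+b\frac{(1+xz)(y+z)}{x-y}-ab\frac{(x+z)(y+z)}{1-xy}. \] For indeterminates $x_1,\dots,x_n$, $y_1,\dots,y_n$, $a_1,\dots,a_n$, $b_1,\dots,b_n$, $z$, \[ \det\left(q(x_i,y_j,z,a_i,b_j)\right)_{1\le i,j\le n}=\frac{(-1)^n}{\prod_{i=1}^n\prod_{j=1}^n(x_i-y_j)(1-x_iy_j)}\det W, \] where $W=(W_{i,j})_{1\le i,j\le 2n+1}$ is given, for $1\le j\le 2n+1$, by $W_{i,j}=x_i^{j-1}-a_ix_i^{2n+1-j}$ for $1\le i\le n$, $W_{i,j}=y_{i-n}^{j-1}-b_{i-n}y_{i-n}^{2n+1-j}$ for $n+1\le i\le 2n$, and $W_{2n+1,j}=(-z)^{2n+1-j}$. *)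

theory Defs
  imports "Jordan_Normal_Form.Determinant"
begin

definition qfun :: "'a::field \<Rightarrow> 'a \<Rightarrow> 'a \<Rightarrow> 'a \<Rightarrow> 'a \<Rightarrow> 'a" where
  "qfun x y z a b =
     (1 + x*z) * (1 + y*z) / (1 - x*y)
     - a * ((x + z) * (1 + y*z) / (x - y))
     + b * ((1 + x*z) * (y + z) / (x - y))
     - a * b * ((x + z) * (y + z) / (1 - x*y))"

text \<open>The (2n+1)x(2n+1) matrix W, with 0-based indices.\<close>
definition Wmat :: "nat \<Rightarrow> (nat \<Rightarrow> 'a::field) \<Rightarrow> (nat \<Rightarrow> 'a) \<Rightarrow> (nat \<Rightarrow> 'a) \<Rightarrow> (nat \<Rightarrow> 'a) \<Rightarrow> 'a \<Rightarrow> 'a mat" where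
  "Wmat n x y a b z = mat (2*n+1) (2*n+1) (\<lambda>(i,j).
     if i < n then x i ^ j - a i * x i ^ (2*n - j)
     else if i < 2*n then y (i-n) ^ j - b (i-n) * y (i-n) ^ (2*n - j)
     else (-z) ^ (2*n - j))"

end

theory Submission
  imports Defs
begin

text \<open>
  In homogeneous coordinates, with \<open>wedge (s, t) (s', t') = t s' - s t'\<close> and \<open>w = (1, -z)\<close>, each
  entry of the matrix is a bilinear combination, with coefficients \<open>1, -a\<^sub>i\<close> and \<open>1, -b\<^sub>j\<close>, of
  the kernel \<open>K p q = - wedge p w * wedge q w / wedge (prod.swap p) q\<close> at the points
  \<open>p \<in> {(x\<^sub>i, 1), (1, x\<^sub>i)}\<close> and \<open>q \<in> {(y\<^sub>j, 1), (1, y\<^sub>j)}\<close>. Expanding the determinant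
  multilinearly in rows and columns reduces the claim to one choice of points per row and column.
  For such a choice, \<open>det (K p\<^sub>i q\<^sub>j)\<close> is a Cauchy determinant scaled by row and column factors,
  hence a product of wedges, which is \<open>(-1)\<^sup>n\<close> over the denominator times the homogeneous
  Vandermonde determinant of the \<open>2n + 1\<close> points \<open>p\<^sub>1, \<dots>, p\<^sub>n, q\<^sub>1, \<dots>, q\<^sub>n, w\<close>.
  Every row of \<open>W\<close> is the same combination of homogeneous Vandermonde rows, so the multilinear
  expansion of \<open>det W\<close> produces the same sum.
\<close>

section \<open>Determinants of explicit matrices\<close>

lemma det_mat_transpose_fun:
  "det (mat n n (\<lambda>(i,j). f j i)) = det (mat n n (\<lambda>(i,j). f i j))"
proof -
  have "mat n n (\<lambda>(i,j). f j i) = transpose_mat (mat n n (\<lambda>(i,j). f i j))"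
    by (rule eq_matI) auto
  thus ?thesis using det_transpose[of "mat n n (\<lambda>(i,j). f i j)" n] by simp
qed

lemma det_mat_scale_rows:
  fixes f :: "nat \<Rightarrow> nat \<Rightarrow> 'a::comm_ring_1"
  shows "det (mat n n (\<lambda>(i,j). r i * f i j)) = (\<Prod>i<n. r i) * det (mat n n (\<lambda>(i,j). f i j))"
proof -
  have "mat n n (\<lambda>(i,j). r i * f i j) = mat\<^sub>r n n (\<lambda>i. r i \<cdot>\<^sub>v vec n (f i))"
    and "mat n n (\<lambda>(i,j). f i j) = mat\<^sub>r n n (\<lambda>i. vec n (f i))"
    by (rule eq_matI; auto)+
  thus ?thesis by (simp add: det_rows_mul atLeast0LessThan)
qed

lemma det_mat_scale_rows_cols:
  fixes f :: "nat \<Rightarrow> nat \<Rightarrow> 'a::comm_ring_1"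
  shows "det (mat n n (\<lambda>(i,j). r i * c j * f i j))
    = (\<Prod>i<n. r i) * (\<Prod>j<n. c j) * det (mat n n (\<lambda>(i,j). f i j))"
  using det_mat_scale_rows[of n r "\<lambda>i j. c j * f i j"] det_mat_scale_rows[of n c "\<lambda>i j. f j i"]
    det_mat_transpose_fun[of n "\<lambda>i j. c i * f j i"] det_mat_transpose_fun[of n "\<lambda>i j. f j i"]
  by (simp add: mult.assoc)

lemma det_single_entry_row:
  assumes A: "A \<in> carrier_mat n n" and "i < n" "j < n"
    and zero: "\<And>j'. j' < n \<Longrightarrow> j' \<noteq> j \<Longrightarrow> A $$ (i,j') = 0"
  shows "det A = (-1)^(i+j) * A $$ (i,j) * det (mat_delete A i j)"
proof -
  have "det A = (\<Sum>j'<n. A $$ (i,j') * cofactor A i j')"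
    by (rule laplace_expansion_row[OF A \<open>i < n\<close>])
  also have "\<dots> = A $$ (i,j) * cofactor A i j"
    using \<open>j < n\<close> zero by (subst sum.remove[of _ j]) (auto intro!: sum.neutral)
  finally show ?thesis by (simp add: cofactor_def ac_simps)
qed

lemma det_single_entry_col:
  assumes A: "A \<in> carrier_mat n n" and "i < n" "j < n"
    and zero: "\<And>i'. i' < n \<Longrightarrow> i' \<noteq> i \<Longrightarrow> A $$ (i',j) = 0"
  shows "det A = (-1)^(i+j) * A $$ (i,j) * det (mat_delete A i j)"
proof -
  have "det A = (\<Sum>i'<n. A $$ (i',j) * cofactor A i' j)"
    by (rule laplace_expansion_column[OF A \<open>j < n\<close>])
  also have "\<dots> = A $$ (i,j) * cofactor A i j"
    using \<open>i < n\<close> zero by (subst sum.remove[of _ i]) (auto intro!: sum.neutral)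
  finally show ?thesis by (simp add: cofactor_def ac_simps)
qed

lemma det_unit_upper_triangular:
  assumes "E \<in> carrier_mat n n" "upper_triangular E" "\<And>i. i < n \<Longrightarrow> E $$ (i,i) = 1"
  shows "det E = 1"
  using assms by (simp add: det_upper_triangular[OF assms(2,1)] diag_mat_def
      flip: prod.distinct_set_conv_list)

lemma det_sub_prev_col:
  fixes A :: "'a::comm_ring_1 mat"
  assumes A: "A \<in> carrier_mat n n"
  shows "det (mat n n (\<lambda>(k,j). if j = 0 then A $$ (k,0) else A $$ (k,j) - c * A $$ (k, j - 1)))
    = det A"
proof -
  define E :: "'a mat" where
    "E = mat n n (\<lambda>(i,j). if i = j then 1 else if Suc i = j then - c else 0)"
  have E: "E \<in> carrier_mat n n" by (simp add: E_def)
  have "mat n n (\<lambda>(k,j). if j = 0 then A $$ (k,0) else A $$ (k,j) - c * A $$ (k, j - 1)) = A * E"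
  proof (rule eq_matI)
    fix k j assume "k < dim_row (A * E)" "j < dim_col (A * E)"
    hence k: "k < n" and j: "j < n" using A E by auto
    have "(A * E) $$ (k,j) = (\<Sum>i<n. (if i = j then A $$ (k,i) else 0)
        - (if Suc i = j then c * A $$ (k,i) else 0))"
      using A k j by (auto simp: E_def scalar_prod_def atLeast0LessThan intro!: sum.cong)
    also have "\<dots> = (if j = 0 then A $$ (k,0) else A $$ (k,j) - c * A $$ (k, j - 1))"
      using j by (cases j) (simp_all add: sum_subtractf)
    finally show "mat n n (\<lambda>(k,j). if j = 0 then A $$ (k,0) else A $$ (k,j) - c * A $$ (k, j - 1))
        $$ (k,j) = (A * E) $$ (k,j)" using k j by simp
  qed (use A E in auto)
  moreover have "det E = 1"
    by (rule det_unit_upper_triangular[OF E]) (auto simp: E_def upper_triangular_def)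
  ultimately show ?thesis by (simp add: det_mult[OF A E])
qed

lemma det_sub_last_row:
  fixes A :: "'a::comm_ring_1 mat"
  assumes A: "A \<in> carrier_mat (Suc m) (Suc m)"
  shows "det (mat (Suc m) (Suc m) (\<lambda>(i,j).
      if i = m then A $$ (m,j) else A $$ (i,j) - l i * A $$ (m,j))) = det A"
proof -
  define L :: "'a mat" where
    "L = mat (Suc m) (Suc m) (\<lambda>(i,k). if i = k then 1 else if k = m then - l i else 0)"
  have L: "L \<in> carrier_mat (Suc m) (Suc m)" by (simp add: L_def)
  have "mat (Suc m) (Suc m) (\<lambda>(i,j). if i = m then A $$ (m,j) else A $$ (i,j) - l i * A $$ (m,j))
      = L * A"
  proof (rule eq_matI)
    fix i j assume "i < dim_row (L * A)" "j < dim_col (L * A)"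
    hence i: "i < Suc m" and j: "j < Suc m" using A L by auto
    have "(L * A) $$ (i,j) = (\<Sum>k<Suc m. (if k = i then A $$ (k,j) else 0)
        - (if k = m \<and> i \<noteq> m then l i * A $$ (k,j) else 0))"
      using A i j
      by (auto simp: L_def scalar_prod_def atLeast0LessThan simp del: sum.lessThan_Suc
          intro!: sum.cong)
    also have "\<dots> = (if i = m then A $$ (m,j) else A $$ (i,j) - l i * A $$ (m,j))"
      using i by (simp add: sum_subtractf)
    finally show "mat (Suc m) (Suc m) (\<lambda>(i,j).
        if i = m then A $$ (m,j) else A $$ (i,j) - l i * A $$ (m,j)) $$ (i,j) = (L * A) $$ (i,j)"
      using i j by simp
  qed (use A L in auto)
  moreover have "det L = 1"
    by (rule det_unit_upper_triangular[OF L]) (auto simp: L_def upper_triangular_def)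
  ultimately show ?thesis by (simp add: det_mult[OF L A])
qed

section \<open>Multilinear expansion\<close>

text \<open>Choice functions are normalised to the identity outside the rows \<open>T\<close>, as in the
  library's multilinear expansion \<open>det_linear_rows_finsum_lemma\<close>.\<close>

definition choice_funs :: "nat set \<Rightarrow> nat set \<Rightarrow> (nat \<Rightarrow> nat) set" where
  "choice_funs T S = {f. (\<forall>i\<in>T. f i \<in> S) \<and> (\<forall>i. i \<notin> T \<longrightarrow> f i = i)}"

lemma det_mat_rows_sum_expand:
  fixes c :: "nat \<Rightarrow> nat \<Rightarrow> 'a::comm_ring_1"
  assumes S: "finite S" and T: "T \<subseteq> {..<N}"
  shows "det (mat N N (\<lambda>(i,j). if i \<in> T then \<Sum>\<alpha>\<in>S. c i \<alpha> * M \<alpha> i j else B i j))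
    = (\<Sum>f\<in>choice_funs T S.
        (\<Prod>i\<in>T. c i (f i)) * det (mat N N (\<lambda>(i,j). if i \<in> T then M (f i) i j else B i j)))"
proof -
  have fT: "finite T" using T finite_subset by blast
  let ?a = "\<lambda>i \<alpha>. c i \<alpha> \<cdot>\<^sub>v vec N (M \<alpha> i)"
  let ?b = "\<lambda>i. vec N (B i)"
  have "mat N N (\<lambda>(i,j). if i \<in> T then \<Sum>\<alpha>\<in>S. c i \<alpha> * M \<alpha> i j else B i j)
      = mat\<^sub>r N N (\<lambda>i. if i \<in> T then finsum_vec TYPE('a) N (?a i) S else ?b i)"
    by (rule eq_matI) (auto simp: index_finsum_vec[OF S])
  moreover have "det (mat\<^sub>r N N (\<lambda>i. if i \<in> T then ?a i (f i) else ?b i))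
      = (\<Prod>i\<in>T. c i (f i)) * det (mat N N (\<lambda>(i,j). if i \<in> T then M (f i) i j else B i j))" for f
  proof -
    let ?r = "\<lambda>i. if i \<in> T then vec N (M (f i) i) else ?b i"
    have "mat\<^sub>r N N (\<lambda>i. if i \<in> T then ?a i (f i) else ?b i)
        = mat\<^sub>r N N (\<lambda>i. (if i \<in> T then c i (f i) else 1) \<cdot>\<^sub>v ?r i)"
      and "mat\<^sub>r N N ?r = mat N N (\<lambda>(i,j). if i \<in> T then M (f i) i j else B i j)"
      by (rule eq_matI; auto)+
    moreover have "(\<Prod>i\<in>{0..<N}. if i \<in> T then c i (f i) else 1) = (\<Prod>i\<in>T. c i (f i))"
      using T by (simp add: prod.If_cases Int_absorb1 atLeast0LessThan)
    ultimately show ?thesis by (simp add: det_rows_mul)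
  qed
  ultimately show ?thesis
    using det_linear_rows_finsum_lemma[OF S fT, where c = ?b and a = ?a and n = N] T
    by (auto simp: choice_funs_def atLeast0LessThan)
qed

lemma det_mat_sum_expand:
  fixes c :: "nat \<Rightarrow> nat \<Rightarrow> 'a::comm_ring_1"
  assumes "finite S"
  shows "det (mat n n (\<lambda>(i,j). \<Sum>\<alpha>\<in>S. c i \<alpha> * M \<alpha> i j))
    = (\<Sum>f\<in>choice_funs {..<n} S. (\<Prod>i<n. c i (f i)) * det (mat n n (\<lambda>(i,j). M (f i) i j)))"
proof -
  have full: "mat n n (\<lambda>(i,j). if i \<in> {..<n} then F i j else 0) = mat n n (\<lambda>(i,j). F i j)" for F
    by (rule cong_mat) auto
  show ?thesis
    using det_mat_rows_sum_expand[OF assms, of "{..<n}" n c M "\<lambda>_ _. 0"] by (simp only: full)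
qed

lemma det_mat_bilinear_expand:
  fixes c d :: "nat \<Rightarrow> nat \<Rightarrow> 'a::comm_ring_1"
  assumes S: "finite S"
  shows "det (mat n n (\<lambda>(i,j). \<Sum>\<alpha>\<in>S. \<Sum>\<beta>\<in>S. c i \<alpha> * d j \<beta> * M \<alpha> \<beta> i j))
    = (\<Sum>f\<in>choice_funs {..<n} S. \<Sum>g\<in>choice_funs {..<n} S.
        (\<Prod>i<n. c i (f i)) * (\<Prod>j<n. d j (g j)) * det (mat n n (\<lambda>(i,j). M (f i) (g j) i j)))"
proof -
  have cols: "det (mat n n (\<lambda>(i,j). \<Sum>\<beta>\<in>S. d j \<beta> * M (f i) \<beta> i j))
      = (\<Sum>g\<in>choice_funs {..<n} S. (\<Prod>j<n. d j (g j)) * det (mat n n (\<lambda>(i,j). M (f i) (g j) i j)))"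
    for f
    using det_mat_sum_expand[OF S, of n d "\<lambda>\<beta> j i. M (f i) \<beta> i j"]
    by (simp add: det_mat_transpose_fun[of n "\<lambda>i j. \<Sum>\<beta>\<in>S. d j \<beta> * M (f i) \<beta> i j"]
        det_mat_transpose_fun[of n "\<lambda>i j. M (f i) (g j) i j" for g])
  have "det (mat n n (\<lambda>(i,j). \<Sum>\<alpha>\<in>S. \<Sum>\<beta>\<in>S. c i \<alpha> * d j \<beta> * M \<alpha> \<beta> i j))
      = det (mat n n (\<lambda>(i,j). \<Sum>\<alpha>\<in>S. c i \<alpha> * (\<Sum>\<beta>\<in>S. d j \<beta> * M \<alpha> \<beta> i j)))"
    by (simp add: sum_distrib_left mult.assoc)
  also have "\<dots> = (\<Sum>f\<in>choice_funs {..<n} S.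
      (\<Prod>i<n. c i (f i)) * det (mat n n (\<lambda>(i,j). \<Sum>\<beta>\<in>S. d j \<beta> * M (f i) \<beta> i j)))"
    by (rule det_mat_sum_expand[OF S])
  finally show ?thesis by (simp add: cols sum_distrib_left mult.assoc)
qed

lemma sum_choice_funs_double:
  "(\<Sum>h\<in>choice_funs {..<2 * n} S. F h)
    = (\<Sum>f\<in>choice_funs {..<n} S. \<Sum>g\<in>choice_funs {..<n} S.
        F (\<lambda>i. if i < n then f i else if i < 2 * n then g (i - n) else i))"
proof -
  have "(\<Sum>h\<in>choice_funs {..<2 * n} S. F h)
      = (\<Sum>(f,g)\<in>choice_funs {..<n} S \<times> choice_funs {..<n} S.
          F (\<lambda>i. if i < n then f i else if i < 2 * n then g (i - n) else i))"
    by (rule sum.reindex_bij_witness[where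
          i = "\<lambda>(f,g) i. if i < n then f i else if i < 2 * n then g (i - n) else i"
          and j = "\<lambda>h. (\<lambda>i. if i < n then h i else i, \<lambda>i. if i < n then h (n + i) else i)"])
       (auto simp: choice_funs_def fun_eq_iff intro!: arg_cong[where f = F])
  thus ?thesis by (simp add: sum.cartesian_product)
qed

section \<open>Homogeneous Vandermonde determinants\<close>

text \<open>For points \<open>p = (s, t)\<close> and \<open>q = (s', t')\<close> of the projective line,
  \<open>wedge p q = t t' (s'/t' - s/t)\<close>: products of wedges are homogenised Vandermonde products.\<close>

definition wedge :: "'a::comm_ring_1 \<times> 'a \<Rightarrow> 'a \<times> 'a \<Rightarrow> 'a" where
  "wedge p q = snd p * fst q - fst p * snd q"

lemma wedge_self [simp]: "wedge p p = 0"
  by (simp add: wedge_def mult.commute)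

lemma wedge_pluecker: "wedge p q * wedge r s - wedge p s * wedge r q = wedge p r * wedge q s"
  by (simp add: wedge_def algebra_simps)

definition hvandermonde :: "nat \<Rightarrow> (nat \<Rightarrow> 'a::comm_ring_1 \<times> 'a) \<Rightarrow> 'a mat" where
  "hvandermonde N P = mat (Suc N) (Suc N) (\<lambda>(k,j). fst (P k) ^ j * snd (P k) ^ (N - j))"

lemma det_hvandermonde_Suc_snd_zero:
  fixes P :: "nat \<Rightarrow> 'a::comm_ring_1 \<times> 'a"
  assumes "snd (P (Suc N)) = 0"
  shows "det (hvandermonde (Suc N) P)
    = (\<Prod>k<Suc N. wedge (P k) (P (Suc N))) * det (hvandermonde N P)"
proof -
  let ?A = "hvandermonde (Suc N) P" and ?s = "fst (P (Suc N))"
  have A: "?A \<in> carrier_mat (Suc (Suc N)) (Suc (Suc N))" by (simp add: hvandermonde_def)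
  have "det ?A = ?A $$ (Suc N, Suc N) * det (mat_delete ?A (Suc N) (Suc N))"
    by (subst det_single_entry_row[OF A, of "Suc N" "Suc N"])
      (auto simp: hvandermonde_def assms power_0_left)
  also have "mat_delete ?A (Suc N) (Suc N)
      = mat (Suc N) (Suc N) (\<lambda>(k,j). snd (P k) * (fst (P k) ^ j * snd (P k) ^ (N - j)))"
    unfolding mat_delete_def hvandermonde_def by (rule cong_mat) (auto simp: Suc_diff_le)
  also have "det \<dots> = (\<Prod>k<Suc N. snd (P k)) * det (hvandermonde N P)"
    by (simp add: det_mat_scale_rows hvandermonde_def)
  also have "?A $$ (Suc N, Suc N) = ?s ^ Suc N" by (simp add: hvandermonde_def)
  also have "?s ^ Suc N = (\<Prod>k<Suc N. ?s)" by simp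
  finally show ?thesis using assms by (simp add: wedge_def prod.distrib mult.commute)
qed

lemma det_hvandermonde_Suc_snd_nonzero:
  fixes P :: "nat \<Rightarrow> 'a::field \<times> 'a"
  assumes "snd (P (Suc N)) \<noteq> 0"
  shows "det (hvandermonde (Suc N) P)
    = (\<Prod>k<Suc N. wedge (P k) (P (Suc N))) * det (hvandermonde N P)"
proof -
  let ?A = "hvandermonde (Suc N) P"
  define s t where "s = fst (P (Suc N))" and "t = snd (P (Suc N))"
  define c where "c = s / t"
  define B where "B = mat (Suc (Suc N)) (Suc (Suc N))
    (\<lambda>(k,j). if j = 0 then ?A $$ (k,0) else ?A $$ (k,j) - c * ?A $$ (k, j - 1))"
  have A: "?A \<in> carrier_mat (Suc (Suc N)) (Suc (Suc N))" by (simp add: hvandermonde_def)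
  have B: "B \<in> carrier_mat (Suc (Suc N)) (Suc (Suc N))" by (simp add: B_def)
  have B_Suc:
    "B $$ (k, Suc j) = (fst (P k) - c * snd (P k)) * (fst (P k) ^ j * snd (P k) ^ (N - j))"
    if "k < Suc (Suc N)" "j < Suc N" for k j
    using that by (simp add: B_def hvandermonde_def Suc_diff_le algebra_simps)
  \<comment> \<open>\<open>c\<close> is the affine coordinate of the last point, which kills its row except the first entry\<close>
  have "det ?A = det B" unfolding B_def by (rule det_sub_prev_col[OF A, symmetric])
  also have "\<dots> = (-1) ^ (Suc N + 0) * B $$ (Suc N, 0) * det (mat_delete B (Suc N) 0)"
  proof (rule det_single_entry_row[OF B])
    fix j assume "j < Suc (Suc N)" "j \<noteq> 0"
    then obtain j' where "j = Suc j'" "j' < Suc N" by (cases j) auto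
    moreover have "s - c * t = 0" using assms by (simp add: c_def s_def t_def)
    ultimately show "B $$ (Suc N, j) = 0" by (simp add: B_Suc s_def t_def)
  qed auto
  also have "B $$ (Suc N, 0) = t ^ Suc N" by (simp add: B_def hvandermonde_def t_def)
  also have "mat_delete B (Suc N) 0
      = mat (Suc N) (Suc N)
          (\<lambda>(k,j). (fst (P k) - c * snd (P k)) * (fst (P k) ^ j * snd (P k) ^ (N - j)))"
    unfolding mat_delete_def using B by (intro cong_mat) (auto simp: B_Suc)
  also have "det \<dots> = (\<Prod>k<Suc N. fst (P k) - c * snd (P k)) * det (hvandermonde N P)"
    by (simp add: det_mat_scale_rows hvandermonde_def)
  finally have det_A: "det ?A = (-1) ^ (Suc N + 0) * t ^ Suc N
      * ((\<Prod>k<Suc N. fst (P k) - c * snd (P k)) * det (hvandermonde N P))" .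
  have "(\<Prod>k<Suc N. wedge (P k) (P (Suc N))) = (\<Prod>k<Suc N. (- t) * (fst (P k) - c * snd (P k)))"
    using assms by (intro prod.cong) (auto simp: wedge_def c_def s_def t_def field_simps)
  also have "\<dots> = (- t) ^ Suc N * (\<Prod>k<Suc N. fst (P k) - c * snd (P k))"
    by (simp only: prod.distrib prod_constant card_lessThan)
  finally show ?thesis unfolding det_A power_minus[of t] by (simp only: mult_ac add_0_right)
qed

lemma det_hvandermonde:
  fixes P :: "nat \<Rightarrow> 'a::field \<times> 'a"
  shows "det (hvandermonde N P) = (\<Prod>l<Suc N. \<Prod>k<l. wedge (P k) (P l))"
proof (induction N)
  case 0
  have "det (hvandermonde 0 P)
      = hvandermonde 0 P $$ (0,0) * det (mat_delete (hvandermonde 0 P) 0 0)"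
    by (subst det_single_entry_row[of _ 1 0 0]) (auto simp: hvandermonde_def)
  thus ?case by (simp add: hvandermonde_def mat_delete_def)
next
  case (Suc N)
  thus ?case
    using det_hvandermonde_Suc_snd_zero[of P N] det_hvandermonde_Suc_snd_nonzero[of P N]
    by (cases "snd (P (Suc N)) = 0") (simp_all add: mult.commute)
qed

lemma prod_lessThan_add:
  fixes m n :: nat
  shows "(\<Prod>l<m + n. f l) = (\<Prod>l<m. f l) * (\<Prod>j<n. f (m + j))"
  by (induction n) (simp_all add: mult.assoc)

lemma prod_triangle_add:
  fixes m n :: nat
  shows "(\<Prod>l<m + n. \<Prod>k<l. F k l)
    = (\<Prod>l<m. \<Prod>k<l. F k l) * (\<Prod>j<n. \<Prod>k<m. F k (m + j)) * (\<Prod>j<n. \<Prod>k<j. F (m + k) (m + j))"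
  by (simp add: prod_lessThan_add prod.distrib mult.assoc)

definition append_points :: "nat \<Rightarrow> (nat \<Rightarrow> 'b) \<Rightarrow> (nat \<Rightarrow> 'b) \<Rightarrow> 'b \<Rightarrow> nat \<Rightarrow> 'b" where
  "append_points m u v w k = (if k < m then u k else if k < 2 * m then v (k - m) else w)"

lemma append_points_simps:
  "k < m \<Longrightarrow> append_points m u v w k = u k"
  "k < m \<Longrightarrow> append_points m u v w (m + k) = v k"
  "append_points m u v w (m + m) = w"
  by (simp_all add: append_points_def)

lemma det_hvandermonde_append_points:
  fixes u v :: "nat \<Rightarrow> 'a::field \<times> 'a"
  shows "det (hvandermonde (2 * m) (append_points m u v w))
    = (\<Prod>l<m. \<Prod>k<l. wedge (u k) (u l) * wedge (v k) (v l))
      * (\<Prod>i<m. \<Prod>j<m. wedge (u i) (v j)) * (\<Prod>i<m. wedge (u i) w) * (\<Prod>j<m. wedge (v j) w)"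
proof -
  let ?P = "append_points m u v w"
  have "det (hvandermonde (2 * m) ?P)
      = (\<Prod>l<m + m. \<Prod>k<l. wedge (?P k) (?P l)) * (\<Prod>k<m + m. wedge (?P k) (?P (m + m)))"
    by (simp add: det_hvandermonde mult_2)
  also have "\<dots> = (\<Prod>l<m. \<Prod>k<l. wedge (u k) (u l)) * (\<Prod>j<m. \<Prod>k<m. wedge (u k) (v j))
      * (\<Prod>j<m. \<Prod>k<j. wedge (v k) (v j)) * ((\<Prod>k<m. wedge (u k) w) * (\<Prod>k<m. wedge (v k) w))"
    unfolding prod_triangle_add prod_lessThan_add
    by (intro arg_cong2[where f = "(*)"] prod.cong) (auto simp: append_points_simps)
  also have "(\<Prod>j<m. \<Prod>k<m. wedge (u k) (v j)) = (\<Prod>i<m. \<Prod>j<m. wedge (u i) (v j))"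
    by (rule prod.swap)
  finally show ?thesis by (simp only: prod.distrib mult_ac)
qed

section \<open>Cauchy determinants\<close>

lemma det_cauchy_wedge_Suc:
  fixes a b :: "nat \<Rightarrow> 'a::field \<times> 'a"
  assumes nz: "\<And>i j. i \<le> m \<Longrightarrow> j \<le> m \<Longrightarrow> wedge (a i) (b j) \<noteq> 0"
  shows "det (mat (Suc m) (Suc m) (\<lambda>(i,j). 1 / wedge (a i) (b j)))
    = (\<Prod>i<m. wedge (a i) (a m) / wedge (a i) (b m)) * (\<Prod>j<m. wedge (b m) (b j) / wedge (a m) (b j))
      / wedge (a m) (b m) * det (mat m m (\<lambda>(i,j). 1 / wedge (a i) (b j)))"
proof -
  let ?C = "mat (Suc m) (Suc m) (\<lambda>(i,j). 1 / wedge (a i) (b j))"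
  define G where "G = mat (Suc m) (Suc m) (\<lambda>(i,j). if i = m then ?C $$ (m,j)
    else ?C $$ (i,j) - wedge (a m) (b m) / wedge (a i) (b m) * ?C $$ (m,j))"
  have G: "G \<in> carrier_mat (Suc m) (Suc m)" by (simp add: G_def)
  have G_upper: "G $$ (i,j) = wedge (a i) (a m) / wedge (a i) (b m)
      * (wedge (b m) (b j) / wedge (a m) (b j)) * (1 / wedge (a i) (b j))"
    if i: "i < m" and j: "j < Suc m" for i j
  proof -
    have "G $$ (i,j)
        = (wedge (a i) (b m) * wedge (a m) (b j) - wedge (a i) (b j) * wedge (a m) (b m))
        / (wedge (a i) (b j) * wedge (a i) (b m) * wedge (a m) (b j))"
      using i j nz[of i j] nz[of i m] nz[of m j] by (simp add: G_def field_simps)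
    thus ?thesis
      using i j nz[of i j] nz[of i m] nz[of m j] by (simp add: wedge_pluecker field_simps)
  qed
  have "det ?C = det G" unfolding G_def by (rule det_sub_last_row[symmetric]) simp
  also have "\<dots> = (-1) ^ (m + m) * G $$ (m,m) * det (mat_delete G m m)"
    by (rule det_single_entry_col[OF G]) (auto simp: G_upper)
  also have "mat_delete G m m = mat m m (\<lambda>(i,j). wedge (a i) (a m) / wedge (a i) (b m)
      * (wedge (b m) (b j) / wedge (a m) (b j)) * (1 / wedge (a i) (b j)))"
    unfolding mat_delete_def using G by (intro cong_mat) (auto simp: G_upper)
  also have "det \<dots> = (\<Prod>i<m. wedge (a i) (a m) / wedge (a i) (b m))
      * (\<Prod>j<m. wedge (b m) (b j) / wedge (a m) (b j))
      * det (mat m m (\<lambda>(i,j). 1 / wedge (a i) (b j)))"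
    by (rule det_mat_scale_rows_cols)
  finally show ?thesis by (simp add: G_def)
qed

lemma det_cauchy_wedge:
  fixes a b :: "nat \<Rightarrow> 'a::field \<times> 'a"
  assumes "\<And>i j. i < m \<Longrightarrow> j < m \<Longrightarrow> wedge (a i) (b j) \<noteq> 0"
  shows "det (mat m m (\<lambda>(i,j). 1 / wedge (a i) (b j))) * (\<Prod>i<m. \<Prod>j<m. wedge (a i) (b j))
    = (\<Prod>l<m. \<Prod>k<l. wedge (a k) (a l) * wedge (b l) (b k))"
  using assms
proof (induction m)
  case 0
  show ?case by (simp add: det_dim_zero)
next
  case (Suc m)
  have nz: "wedge (a i) (b j) \<noteq> 0" if "i \<le> m" "j \<le> m" for i j using Suc.prems that by simp
  have IH: "det (mat m m (\<lambda>(i,j). 1 / wedge (a i) (b j))) * (\<Prod>i<m. \<Prod>j<m. wedge (a i) (b j))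
      = (\<Prod>l<m. \<Prod>k<l. wedge (a k) (a l) * wedge (b l) (b k))"
    using Suc.IH nz by simp
  have cancel_a: "(\<Prod>i<m. wedge (a i) (a m) / wedge (a i) (b m)) * (\<Prod>i<m. wedge (a i) (b m))
      = (\<Prod>i<m. wedge (a i) (a m))"
    unfolding prod.distrib[symmetric] using nz by (intro prod.cong) auto
  have cancel_b: "(\<Prod>j<m. wedge (b m) (b j) / wedge (a m) (b j)) * (\<Prod>j<m. wedge (a m) (b j))
      = (\<Prod>j<m. wedge (b m) (b j))"
    unfolding prod.distrib[symmetric] using nz by (intro prod.cong) auto
  let ?X = "\<Prod>i<m. wedge (a i) (a m) / wedge (a i) (b m)"
    and ?Y = "\<Prod>j<m. wedge (b m) (b j) / wedge (a m) (b j)"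
  have "det (mat (Suc m) (Suc m) (\<lambda>(i,j). 1 / wedge (a i) (b j)))
      * (\<Prod>i<Suc m. \<Prod>j<Suc m. wedge (a i) (b j))
      = ?X * ?Y / wedge (a m) (b m) * det (mat m m (\<lambda>(i,j). 1 / wedge (a i) (b j)))
      * ((\<Prod>i<m. \<Prod>j<m. wedge (a i) (b j)) * (\<Prod>i<m. wedge (a i) (b m))
        * ((\<Prod>j<m. wedge (a m) (b j)) * wedge (a m) (b m)))"
    by (simp add: det_cauchy_wedge_Suc[OF nz] prod.distrib)
  also have "\<dots> = ?X * (\<Prod>i<m. wedge (a i) (b m)) * (?Y * (\<Prod>j<m. wedge (a m) (b j)))
      * (det (mat m m (\<lambda>(i,j). 1 / wedge (a i) (b j))) * (\<Prod>i<m. \<Prod>j<m. wedge (a i) (b j)))"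
    using nz[of m m] by (simp add: field_simps)
  also have "\<dots> = (\<Prod>l<Suc m. \<Prod>k<l. wedge (a k) (a l) * wedge (b l) (b k))"
    unfolding cancel_a cancel_b IH by (simp add: prod.distrib)
  finally show ?case .
qed

text \<open>With \<open>w = (1, -z)\<close>, the values of \<open>cauchy_kernel w p q\<close> for \<open>p \<in> {(x, 1), (1, x)}\<close> and
  \<open>q \<in> {(y, 1), (1, y)}\<close> are the four fractions in \<open>qfun x y z a b\<close>.\<close>

definition cauchy_kernel :: "'a::field \<times> 'a \<Rightarrow> 'a \<times> 'a \<Rightarrow> 'a \<times> 'a \<Rightarrow> 'a" where
  "cauchy_kernel w p q = - wedge p w * wedge q w / wedge (prod.swap p) q"

lemma det_cauchy_kernel:
  fixes u v :: "nat \<Rightarrow> 'a::field \<times> 'a"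
  assumes "\<And>i j. i < m \<Longrightarrow> j < m \<Longrightarrow> wedge (prod.swap (u i)) (v j) \<noteq> 0"
  shows "det (mat m m (\<lambda>(i,j). cauchy_kernel w (u i) (v j)))
      * (\<Prod>i<m. \<Prod>j<m. wedge (u i) (v j) * wedge (prod.swap (u i)) (v j))
    = (-1) ^ m * det (hvandermonde (2 * m) (append_points m u v w))"
proof -
  let ?C = "det (mat m m (\<lambda>(i,j). 1 / wedge (prod.swap (u i)) (v j)))"
  have "det (mat m m (\<lambda>(i,j). cauchy_kernel w (u i) (v j)))
      = (\<Prod>i<m. - wedge (u i) w) * (\<Prod>j<m. wedge (v j) w) * ?C"
    using det_mat_scale_rows_cols[of m "\<lambda>i. - wedge (u i) w" "\<lambda>j. wedge (v j) w"
        "\<lambda>i j. 1 / wedge (prod.swap (u i)) (v j)"]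
    by (simp add: cauchy_kernel_def)
  also have "(\<Prod>i<m. - wedge (u i) w) = (-1) ^ m * (\<Prod>i<m. wedge (u i) w)"
    using prod.distrib[of "\<lambda>_. - 1" "\<lambda>i. wedge (u i) w" "{..<m}"] by simp
  finally have kernel: "det (mat m m (\<lambda>(i,j). cauchy_kernel w (u i) (v j)))
      = (-1) ^ m * (\<Prod>i<m. wedge (u i) w) * (\<Prod>j<m. wedge (v j) w) * ?C" .
  have swap: "wedge (prod.swap p) (prod.swap q) * wedge r s = wedge p q * wedge s r"
    for p q r s :: "'a \<times> 'a"
    by (simp add: wedge_def algebra_simps)
  have cauchy: "?C * (\<Prod>i<m. \<Prod>j<m. wedge (prod.swap (u i)) (v j))
      = (\<Prod>l<m. \<Prod>k<l. wedge (u k) (u l)) * (\<Prod>l<m. \<Prod>k<l. wedge (v k) (v l))"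
    using det_cauchy_wedge[of m "\<lambda>i. prod.swap (u i)" v] assms by (simp add: swap prod.distrib)
  show ?thesis
    unfolding kernel det_hvandermonde_append_points cauchy[symmetric] prod.distrib
    by (simp only: mult_ac)
qed

section \<open>The determinant of the matrix of q\<close>

text \<open>Row \<open>i < n\<close> of \<open>Wmat\<close> is the sum over \<open>\<alpha> \<in> {0,1}\<close> of \<open>hcoeff (a i) \<alpha>\<close> times the
  Vandermonde row of \<open>hpoint (x i) \<alpha>\<close>, since \<open>x\<^sup>j = fst (x,1)\<^sup>j snd (x,1)\<^bsup>2n-j\<^esup>\<close> and
  \<open>x\<^bsup>2n-j\<^esup> = fst (1,x)\<^sup>j snd (1,x)\<^bsup>2n-j\<^esup>\<close>; likewise for the rows of \<open>y\<close>, and the last row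
  belongs to the point \<open>(1, -z)\<close>.\<close>

definition hpoint :: "'a::field \<Rightarrow> nat \<Rightarrow> 'a \<times> 'a" where
  "hpoint x \<alpha> = (if \<alpha> = 0 then (x, 1) else (1, x))"

definition hcoeff :: "'a::field \<Rightarrow> nat \<Rightarrow> 'a" where
  "hcoeff a \<alpha> = (if \<alpha> = 0 then 1 else - a)"

lemma qfun_eq_kernel_sum:
  fixes x y z a b :: "'a::field"
  assumes "x \<noteq> y" and "1 - x * y \<noteq> 0"
  shows "qfun x y z a b = (\<Sum>\<alpha>\<in>{0,1}. \<Sum>\<beta>\<in>{0,1}.
    hcoeff a \<alpha> * hcoeff b \<beta> * cauchy_kernel (1, -z) (hpoint x \<alpha>) (hpoint y \<beta>))"
proof -
  have "x * y - 1 \<noteq> 0" "y - x \<noteq> 0" "x - y \<noteq> 0" using assms by auto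
  hence k: "cauchy_kernel (1, -z) (hpoint x 0) (hpoint y 0) = (1 + x*z) * (1 + y*z) / (1 - x*y)"
    "cauchy_kernel (1, -z) (hpoint x 1) (hpoint y 0) = (x + z) * (1 + y*z) / (x - y)"
    "cauchy_kernel (1, -z) (hpoint x 0) (hpoint y 1) = - ((1 + x*z) * (y + z) / (x - y))"
    "cauchy_kernel (1, -z) (hpoint x 1) (hpoint y 1) = - ((x + z) * (y + z) / (1 - x*y))"
    using assms by (simp_all add: cauchy_kernel_def hpoint_def wedge_def field_simps)
  have sum_01: "(\<Sum>\<alpha>\<in>{0,1}. F \<alpha>) = F 0 + F (1::nat)" for F :: "nat \<Rightarrow> 'a" by simp
  show ?thesis unfolding sum_01 k by (simp add: qfun_def hcoeff_def)
qed

lemma wedge_hpoint: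
  fixes x y :: "'a::field"
  assumes "\<alpha> \<in> {0,1}" "\<beta> \<in> {0,1}"
  shows "wedge (hpoint x \<alpha>) (hpoint y \<beta>) * wedge (prod.swap (hpoint x \<alpha>)) (hpoint y \<beta>)
    = (x - y) * (1 - x * y)"
  using assms by (auto simp: hpoint_def wedge_def algebra_simps)

lemma wedge_swap_hpoint_nonzero:
  fixes x y :: "'a::field"
  assumes "\<alpha> \<in> {0,1}" "\<beta> \<in> {0,1}" "x \<noteq> y" "1 - x * y \<noteq> 0"
  shows "wedge (prod.swap (hpoint x \<alpha>)) (hpoint y \<beta>) \<noteq> 0"
  using wedge_hpoint[OF assms(1,2), of x y] assms(3,4) by auto

lemma det_cauchy_kernel_hpoints:
  fixes x y :: "nat \<Rightarrow> 'a::field"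
  assumes xy: "\<And>i j. i < n \<Longrightarrow> j < n \<Longrightarrow> x i \<noteq> y j"
    and xy1: "\<And>i j. i < n \<Longrightarrow> j < n \<Longrightarrow> 1 - x i * y j \<noteq> 0"
    and f: "f \<in> choice_funs {..<n} {0,1}" and g: "g \<in> choice_funs {..<n} {0,1}"
  shows "det (mat n n (\<lambda>(i,j). cauchy_kernel w (hpoint (x i) (f i)) (hpoint (y j) (g j))))
    = (-1) ^ n / (\<Prod>i<n. \<Prod>j<n. (x i - y j) * (1 - x i * y j))
      * det (hvandermonde (2 * n)
          (append_points n (\<lambda>i. hpoint (x i) (f i)) (\<lambda>j. hpoint (y j) (g j)) w))"
proof -
  have fg: "f i \<in> {0,1}" "g i \<in> {0,1}" if "i < n" for i
    using f g that by (auto simp: choice_funs_def)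
  have "(\<Prod>i<n. \<Prod>j<n. wedge (hpoint (x i) (f i)) (hpoint (y j) (g j))
        * wedge (prod.swap (hpoint (x i) (f i))) (hpoint (y j) (g j)))
      = (\<Prod>i<n. \<Prod>j<n. (x i - y j) * (1 - x i * y j))"
    by (intro prod.cong refl wedge_hpoint fg) auto
  moreover have "wedge (prod.swap (hpoint (x i) (f i))) (hpoint (y j) (g j)) \<noteq> 0"
    if "i < n" "j < n" for i j
    using that by (intro wedge_swap_hpoint_nonzero fg xy xy1)
  ultimately have "det (mat n n (\<lambda>(i,j). cauchy_kernel w (hpoint (x i) (f i)) (hpoint (y j) (g j))))
      * (\<Prod>i<n. \<Prod>j<n. (x i - y j) * (1 - x i * y j))
    = (-1) ^ n * det (hvandermonde (2 * n)
          (append_points n (\<lambda>i. hpoint (x i) (f i)) (\<lambda>j. hpoint (y j) (g j)) w))"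
    using det_cauchy_kernel[of n "\<lambda>i. hpoint (x i) (f i)" "\<lambda>j. hpoint (y j) (g j)" w] by simp
  moreover have "(\<Prod>i<n. \<Prod>j<n. (x i - y j) * (1 - x i * y j)) \<noteq> 0"
    using xy xy1 by simp
  ultimately show ?thesis by (simp add: eq_divide_eq)
qed

lemma det_Wmat_expand:
  fixes x y a b :: "nat \<Rightarrow> 'a::field"
  shows "det (Wmat n x y a b z) = (\<Sum>f\<in>choice_funs {..<n} {0,1}. \<Sum>g\<in>choice_funs {..<n} {0,1}.
      (\<Prod>i<n. hcoeff (a i) (f i)) * (\<Prod>j<n. hcoeff (b j) (g j))
      * det (hvandermonde (2 * n)
          (append_points n (\<lambda>i. hpoint (x i) (f i)) (\<lambda>j. hpoint (y j) (g j)) (1, -z))))"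
proof -
  define p where "p i \<alpha> = (if i < n then hpoint (x i) \<alpha> else hpoint (y (i - n)) \<alpha>)" for i \<alpha>
  define c where "c i \<alpha> = (if i < n then hcoeff (a i) \<alpha> else hcoeff (b (i - n)) \<alpha>)" for i \<alpha>
  define row :: "'a \<times> 'a \<Rightarrow> nat \<Rightarrow> 'a" where "row q j = fst q ^ j * snd q ^ (2 * n - j)" for q j
  have W: "Wmat n x y a b z = mat (Suc (2 * n)) (Suc (2 * n)) (\<lambda>(i,j).
      if i \<in> {..<2 * n} then \<Sum>\<alpha>\<in>{0,1}. c i \<alpha> * row (p i \<alpha>) j else row (1, -z) j)"
    unfolding Wmat_def by (rule cong_mat) (auto simp: c_def p_def row_def hpoint_def hcoeff_def)
  have V: "mat (Suc (2 * n)) (Suc (2 * n)) (\<lambda>(i,j).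
        if i \<in> {..<2 * n} then row (p i (h i)) j else row (1, -z) j)
      = hvandermonde (2 * n) (\<lambda>k. if k < 2 * n then p k (h k) else (1, -z))" for h
    unfolding hvandermonde_def by (rule cong_mat) (simp_all add: row_def)
  have "det (Wmat n x y a b z) = (\<Sum>h\<in>choice_funs {..<2 * n} {0,1}. (\<Prod>i<2 * n. c i (h i))
      * det (hvandermonde (2 * n) (\<lambda>k. if k < 2 * n then p k (h k) else (1, -z))))"
    unfolding W V[symmetric] by (rule det_mat_rows_sum_expand) auto
  also have "\<dots> = (\<Sum>f\<in>choice_funs {..<n} {0,1}. \<Sum>g\<in>choice_funs {..<n} {0,1}.
      (\<Prod>i<n. hcoeff (a i) (f i)) * (\<Prod>j<n. hcoeff (b j) (g j))
      * det (hvandermonde (2 * n)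
          (append_points n (\<lambda>i. hpoint (x i) (f i)) (\<lambda>j. hpoint (y j) (g j)) (1, -z))))"
    unfolding sum_choice_funs_double
    by (intro sum.cong refl arg_cong2[where f = "(*)"])
      (auto simp: mult_2 prod_lessThan_add c_def p_def append_points_def
        intro!: prod.cong arg_cong[where f = det] arg_cong[where f = "hvandermonde (n + n)"] ext)
  finally show ?thesis .
qed

theorem lemma4p5:
  fixes n :: nat and x y a b :: "nat \<Rightarrow> 'a::field" and z :: 'a
  assumes "\<And>i j. i < n \<Longrightarrow> j < n \<Longrightarrow> x i \<noteq> y j"
    and "\<And>i j. i < n \<Longrightarrow> j < n \<Longrightarrow> 1 - x i * y j \<noteq> 0"
  shows "det (mat n n (\<lambda>(i,j). qfun (x i) (y j) z (a i) (b j)))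
         = (-1)^n / (\<Prod>i<n. \<Prod>j<n. (x i - y j) * (1 - x i * y j)) * det (Wmat n x y a b z)"
proof -
  let ?F = "choice_funs {..<n} {0, 1}"
  let ?V = "\<lambda>f g. det (hvandermonde (2 * n)
    (append_points n (\<lambda>i. hpoint (x i) (f i)) (\<lambda>j. hpoint (y j) (g j)) (1, -z)))"
  have q: "mat n n (\<lambda>(i,j). qfun (x i) (y j) z (a i) (b j))
    = mat n n (\<lambda>(i,j). \<Sum>\<alpha>\<in>{0,1}. \<Sum>\<beta>\<in>{0,1}.
      hcoeff (a i) \<alpha> * hcoeff (b j) \<beta> * cauchy_kernel (1, -z) (hpoint (x i) \<alpha>) (hpoint (y j) \<beta>))"
    using assms by (intro cong_mat) (auto simp: qfun_eq_kernel_sum)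
  have "det (mat n n (\<lambda>(i,j). qfun (x i) (y j) z (a i) (b j)))
      = (\<Sum>f\<in>?F. \<Sum>g\<in>?F. (\<Prod>i<n. hcoeff (a i) (f i)) * (\<Prod>j<n. hcoeff (b j) (g j))
          * det (mat n n (\<lambda>(i,j). cauchy_kernel (1, -z) (hpoint (x i) (f i)) (hpoint (y j) (g j)))))"
    unfolding q by (rule det_mat_bilinear_expand) simp
  also have "\<dots> = (\<Sum>f\<in>?F. \<Sum>g\<in>?F. (\<Prod>i<n. hcoeff (a i) (f i)) * (\<Prod>j<n. hcoeff (b j) (g j))
      * ((-1) ^ n / (\<Prod>i<n. \<Prod>j<n. (x i - y j) * (1 - x i * y j)) * ?V f g))"
    using assms by (intro sum.cong refl) (simp add: det_cauchy_kernel_hpoints)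
  also have "\<dots> = (-1)^n / (\<Prod>i<n. \<Prod>j<n. (x i - y j) * (1 - x i * y j)) * det (Wmat n x y a b z)"
    by (simp add: det_Wmat_expand sum_distrib_left mult_ac)
  finally show ?thesis .
qed

end
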